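(* Assume $C^\top C\succ0$, let $\gamma>0$, $\sigma>0$, $\lambda>0$, and let $(\widetilde W_r)_{r\ge0}$ be generated by the alternating scheme of the context from a feasible initial point $\widetilde W_0\in\mathcal{X}_1$, $y_0\in\mathbb{R}^{mn}_+$. Let $H^\infty_\sigma=\lim_{r\to\infty}H_\sigma(\widetilde W_r)$ (the sequence $H_\sigma(\widetilde W_r)$ is nonincreasing and bounded below) and $H^*_\sigma=\inf_{\widetilde W}H_\sigma(\widetilde W)$. If $H^\infty_\sigma=H^*_\sigma$, then every cluster point of $(\widetilde W_r)$ belongs to $\operatorname{argmin}H_\sigma$.
   Context: Let $n,m,M\ge1$, $p=m+n$. For $i=1,\dots,M$ let $A_i\in\mathbb{R}^{n\times n}$, $B_{2,i}\in\mathbb{R}^{n\times m}$, $F_i=\begin{bmatrix}A_i&B_{2,i}\\0&0\end{bmatrix}$. Let $B_1\in\mathbb{R}^{n\times l}$, $C\in\mathbb{R}^{q\times n}$, $D\in\mathbb{R}^{q\times m}$ with $C^\top D=0$, $D^\top D\succ0$, $B_1B_1^\top\succ0$; $Q=\begin{bmatrix}B_1B_1^\top&0\\0&0\end{bmatrix}$, $R=\begin{bmatrix}C^\top C&0\\0&D^\top D\end{bmatrix}$, $V_1=[0,\ I_m]$, $V_2=[I_n,\ 0]$, $\Psi_i(W)=-V_2(F_iW+WF_i^\top+Q)V_2^\top$. $\mathrm{vec}$ is column-stacking; $\mathcal{P}:=V_2\otimes V_1$, so $\mathcal{P}\,\mathrm{vec}(W)=\mathrm{vec}(V_1WV_2^\top)$.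 $\Gamma^k_+=\{\mathrm{vec}(X):X\in\mathbb{S}^k_+\}$, $\delta_S$ the indicator of $S$, $\Omega=\{\mathrm{vec}(W):W_{ij}=0,\ 1\le i<j\le n\}$, $\mathcal{X}_1=\{\mathrm{vec}(W)\in\Gamma^p_+:\mathrm{vec}(\Psi_i(W))\in\Gamma^n_+\ \forall i,\ \mathrm{vec}(W)\in\Omega\}$, $r_1(\widetilde W)=\langle\mathrm{vec}(R),\widetilde W\rangle+\delta_{\mathcal{X}_1}(\widetilde W)$. For $x\in\mathbb{R}^{mn}$, $f_\sigma(x)=\sum_\ell(1-e^{-x_\ell/\sigma})$, $g_\sigma=-f_\sigma$, $g_\sigma^*$ its convex conjugate; $|\cdot|$ componentwise. $H_\sigma(\widetilde W)=r_1(\widetilde W)+\gamma f_\sigma(|\mathcal{P}\widetilde W|)$. Scheme: for $r=1,2,\dots$: if $r$ is odd, $\widetilde W_r=\widetilde W_{r-1}$ and $y_r=\operatorname{argmin}_{y\in\mathbb{R}^{mn}_+}\{\gamma g_\sigma^*(-y)+\gamma y^\top|\mathcal{P}\widetilde W_{r-1}|\}=\nabla f_\sigma(|\mathcal{P}\widetilde W_{r-1}|)$; if $r$ is even, $y_r=y_{r-1}$ and $\widetilde W_r\in\operatorname{argmin}_{\widetilde W\in\mathcal{X}_1}\{\langle\mathrm{vec}(R),\widetilde W\rangle+\gamma y_{r-1}^\top|\mathcal{P}\widetilde W|+\frac1{2\lambda}\|\widetilde W-\widetilde W_{r-1}\|^2\}$. *)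

theory Defs
  imports "HOL-Analysis.Analysis"
begin

text \<open>Index types: 'n (linearly ordered, representing 1..n), 'm, 'l, 'q finite.
  The p x p matrices (p = n + m) are indexed by 'n + 'm: Inl i is the i-th of the first n
  indices, Inr k the (n+k)-th. Vectorisation vec(W) in R^(p^2) is identified with W itself:
  the Euclidean inner product on R^(p^2) becomes the Frobenius inner product and the
  Euclidean norm the Frobenius norm (which is the norm of real^'p^'p). Vectors in R^(mn)
  (images of the map P) are m x n matrices real^'n^'m.\<close>

text \<open>rmat 'b 'a = real matrices with rows indexed by 'a and columns by 'b
  (the same as real^'b^'a, written without the ^ syntax so that sort constraints such as
  linorder can be attached to index variables).\<close>
type_synonym ('b, 'a) rmat = "((real, 'b) vec, 'a) vec"

definition psd :: "real^('k::finite)^'k \<Rightarrow> bool" where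
  "psd X \<longleftrightarrow> transpose X = X \<and> (\<forall>x. 0 \<le> x \<bullet> (X *v x))"

definition posdef :: "real^('k::finite)^'k \<Rightarrow> bool" where
  "posdef X \<longleftrightarrow> transpose X = X \<and> (\<forall>x. x \<noteq> 0 \<longrightarrow> 0 < x \<bullet> (X *v x))"

definition V1 :: "real^('n::finite + 'm::finite)^'m" where
  "V1 = (\<chi> j k. case k of Inl _ \<Rightarrow> 0 | Inr k' \<Rightarrow> (if k' = j then 1 else 0))"

definition V2 :: "real^('n::finite + 'm::finite)^'n" where
  "V2 = (\<chi> i k. case k of Inl k' \<Rightarrow> (if k' = i then 1 else 0) | Inr _ \<Rightarrow> 0)"

definition Fmat :: "real^('n::finite)^'n \<Rightarrow> real^('m::finite)^'n \<Rightarrow> real^('n + 'm)^('n + 'm)" where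
  "Fmat A B2 = (\<chi> a b. case a of
      Inl i \<Rightarrow> (case b of Inl j \<Rightarrow> A $ i $ j | Inr k \<Rightarrow> B2 $ i $ k)
    | Inr _ \<Rightarrow> 0)"

definition Qmat :: "real^('l::finite)^'n::finite \<Rightarrow> real^('n + 'm::finite)^('n + 'm)" where
  "Qmat B1 = (\<chi> a b. case (a, b) of
      (Inl i, Inl j) \<Rightarrow> (B1 ** transpose B1) $ i $ j
    | _ \<Rightarrow> 0)"

definition Rmat :: "real^('n::finite)^'q::finite \<Rightarrow> real^('m::finite)^'q \<Rightarrow> real^('n + 'm)^('n + 'm)" where
  "Rmat C D = (\<chi> a b. case (a, b) of
      (Inl i, Inl j) \<Rightarrow> (transpose C ** C) $ i $ j
    | (Inr i, Inr j) \<Rightarrow> (transpose D ** D) $ i $ j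
    | _ \<Rightarrow> 0)"

definition Psi :: "real^('n::finite)^'n \<Rightarrow> real^('m::finite)^'n \<Rightarrow> real^('l::finite)^'n
    \<Rightarrow> real^('n + 'm)^('n + 'm) \<Rightarrow> real^'n^'n" where
  "Psi A B2 B1 W = - (V2 ** (Fmat A B2 ** W + W ** transpose (Fmat A B2) + Qmat B1)
                       ** transpose V2)"

definition Omega :: "('n::{finite,linorder} + 'm::finite, 'n + 'm) rmat set" where
  "Omega = {W. \<forall>i j. i < j \<longrightarrow> W $ Inl i $ Inl j = 0}"

definition X1 :: "nat \<Rightarrow> (nat \<Rightarrow> ('n::{finite,linorder}, 'n) rmat) \<Rightarrow> (nat \<Rightarrow> ('m::finite, 'n) rmat)
    \<Rightarrow> ('l::finite, 'n) rmat \<Rightarrow> ('n + 'm, 'n + 'm) rmat set" where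
  "X1 M A B2 B1 = {W. psd W \<and> (\<forall>i\<in>{1..M}. psd (Psi (A i) (B2 i) B1 W)) \<and> W \<in> Omega}"

definition frob :: "real^('b::finite)^'a::finite \<Rightarrow> real^'b^'a \<Rightarrow> real" where
  "frob X Y = (\<Sum>i\<in>UNIV. \<Sum>j\<in>UNIV. X $ i $ j * Y $ i $ j)"

definition Pmap :: "real^('n::finite + 'm::finite)^('n + 'm) \<Rightarrow> real^'n^'m" where
  "Pmap W = V1 ** W ** transpose V2"

definition absm :: "real^('b::finite)^'a::finite \<Rightarrow> real^'b^'a" where
  "absm x = (\<chi> j k. \<bar>x $ j $ k\<bar>)"

definition fsig :: "real \<Rightarrow> real^('b::finite)^'a::finite \<Rightarrow> real" where
  "fsig \<sigma> x = (\<Sum>j\<in>UNIV. \<Sum>k\<in>UNIV. 1 - exp (- (x $ j $ k) / \<sigma>))"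

definition grad_fsig :: "real \<Rightarrow> real^('b::finite)^'a::finite \<Rightarrow> real^'b^'a" where
  "grad_fsig \<sigma> x = (\<chi> j k. exp (- (x $ j $ k) / \<sigma>) / \<sigma>)"

definition Hsig :: "nat \<Rightarrow> (nat \<Rightarrow> ('n::{finite,linorder}, 'n) rmat) \<Rightarrow> (nat \<Rightarrow> ('m::finite, 'n) rmat)
    \<Rightarrow> ('l::finite, 'n) rmat \<Rightarrow> ('n, 'q::finite) rmat \<Rightarrow> ('m, 'q) rmat \<Rightarrow> real \<Rightarrow> real
    \<Rightarrow> ('n + 'm, 'n + 'm) rmat \<Rightarrow> ereal" where
  "Hsig M A B2 B1 C D \<gamma> \<sigma> W =
     (if W \<in> X1 M A B2 B1
      then ereal (frob (Rmat C D) W + \<gamma> * fsig \<sigma> (absm (Pmap W)))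
      else \<infinity>)"

definition Wobj :: "real^('n::finite)^'q::finite \<Rightarrow> real^('m::finite)^'q \<Rightarrow> real \<Rightarrow> real \<Rightarrow> real^'n^'m
    \<Rightarrow> real^('n + 'm)^('n + 'm)
    \<Rightarrow> real^('n + 'm)^('n + 'm) \<Rightarrow> real" where
  "Wobj C D \<gamma> lam y Wprev W =
     frob (Rmat C D) W + \<gamma> * frob y (absm (Pmap W)) + (1 / (2 * lam)) * (norm (W - Wprev))\<^sup>2"

definition nonneg_mat :: "real^('b::finite)^'a::finite \<Rightarrow> bool" where
  "nonneg_mat y \<longleftrightarrow> (\<forall>j k. 0 \<le> y $ j $ k)"

end

theory Submission
  imports Defs
begin

text \<open>The W-step is a majorize-minimize step: f_sigma is concave, so its linearization at the
  current iterate majorizes it, and minimizing the proximal linearized objective therefore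
  cannot increase H_sigma. Thus H_sigma(W_r) decreases to its limit. The feasible set X_1 is closed
  and H_sigma is continuous on it, so along a convergent subsequence H_sigma at the cluster point
  equals this limit, which is the infimum by hypothesis.\<close>

lemma continuous_on_matrix_matrix_mult [continuous_intros]:
  fixes f :: "'z::topological_space \<Rightarrow> real^('b::finite)^('a::finite)"
    and g :: "'z \<Rightarrow> real^('c::finite)^'b"
  assumes "continuous_on S f" "continuous_on S g"
  shows "continuous_on S (\<lambda>x. f x ** g x)"
  unfolding matrix_matrix_mult_def by (intro continuous_intros assms)

lemma continuous_on_transpose [continuous_intros]:
  fixes f :: "'z::topological_space \<Rightarrow> real^('b::finite)^('a::finite)"
  assumes "continuous_on S f"
  shows "continuous_on S (\<lambda>x. transpose (f x))"
  unfolding transpose_def by (intro continuous_intros assms)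

lemma continuous_on_matrix_vector_mult [continuous_intros]:
  fixes f :: "'z::topological_space \<Rightarrow> real^('b::finite)^('a::finite)"
  assumes "continuous_on S f"
  shows "continuous_on S (\<lambda>x. f x *v v)"
  unfolding matrix_vector_mult_def by (intro continuous_intros assms)

lemma continuous_on_absm [continuous_intros]:
  fixes f :: "'z::topological_space \<Rightarrow> real^('b::finite)^('a::finite)"
  assumes "continuous_on S f"
  shows "continuous_on S (\<lambda>x. absm (f x))"
  unfolding absm_def by (intro continuous_intros assms)

lemma continuous_on_frob [continuous_intros]:
  fixes f :: "'z::topological_space \<Rightarrow> real^('b::finite)^('a::finite)"
  assumes "continuous_on S f"
  shows "continuous_on S (\<lambda>x. frob R (f x))"
  unfolding frob_def by (intro continuous_intros assms)

lemma continuous_on_fsig [continuous_intros]: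
  fixes f :: "'z::topological_space \<Rightarrow> real^('b::finite)^('a::finite)"
  assumes "continuous_on S f"
  shows "continuous_on S (\<lambda>x. fsig \<sigma> (f x))"
  unfolding fsig_def divide_inverse by (intro continuous_intros assms)

lemma closed_psd: "closed {X :: real^('k::finite)^'k. psd X}"
  unfolding psd_def
  by (intro closed_Collect_conj closed_Collect_all closed_Collect_eq closed_Collect_le
      continuous_intros)

lemma closed_Omega: "closed Omega"
  unfolding Omega_def
  by (intro closed_Collect_all closed_Collect_imp closed_Collect_eq continuous_intros)
     auto

lemma closed_X1: "closed (X1 M A B2 B1)"
proof -
  have X1_eq: "X1 M A B2 B1 = {W. psd W}
      \<inter> (\<Inter>i\<in>{1..M}. Psi (A i) (B2 i) B1 -` {X. psd X}) \<inter> Omega"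
    unfolding X1_def by auto
  have "closed (Psi (A i) (B2 i) B1 -` {X. psd X})" for i
    by (rule closed_vimage[OF closed_psd]) (unfold Psi_def, intro continuous_intros)
  then show ?thesis
    unfolding X1_eq by (intro closed_Int closed_INT ballI closed_psd closed_Omega)
qed

definition Hreal :: "('n::finite, 'q::finite) rmat \<Rightarrow> ('m::finite, 'q) rmat \<Rightarrow> real \<Rightarrow> real
    \<Rightarrow> ('n + 'm, 'n + 'm) rmat \<Rightarrow> real" where
  "Hreal C D \<gamma> \<sigma> W = frob (Rmat C D) W + \<gamma> * fsig \<sigma> (absm (Pmap W))"

lemma Hsig_eq_Hreal:
  "W \<in> X1 M A B2 B1 \<Longrightarrow> Hsig M A B2 B1 C D \<gamma> \<sigma> W = ereal (Hreal C D \<gamma> \<sigma> W)"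
  unfolding Hsig_def Hreal_def by simp

lemma continuous_on_Hsig: "continuous_on (X1 M A B2 B1) (Hsig M A B2 B1 C D \<gamma> \<sigma>)"
proof -
  have "continuous_on (X1 M A B2 B1) (\<lambda>W. ereal (Hreal C D \<gamma> \<sigma> W))"
    unfolding Hreal_def Pmap_def by (intro continuous_intros)
  then show ?thesis
    by (rule continuous_on_cong[THEN iffD1, OF refl, rotated]) (simp add: Hsig_eq_Hreal)
qed

lemma one_minus_exp_le_tangent:
  fixes u v \<sigma> :: real
  shows "1 - exp (- u / \<sigma>) \<le> 1 - exp (- v / \<sigma>) + exp (- v / \<sigma>) / \<sigma> * (u - v)"
proof -
  have "1 + (v - u) / \<sigma> \<le> exp ((v - u) / \<sigma>)"
    by (rule exp_ge_add_one_self)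
  then have "exp (- v / \<sigma>) * (1 + (v - u) / \<sigma>) \<le> exp (- v / \<sigma>) * exp ((v - u) / \<sigma>)"
    by simp
  also have "\<dots> = exp (- u / \<sigma>)"
    by (simp add: exp_add[symmetric] diff_divide_distrib)
  finally show ?thesis
    by (simp add: algebra_simps diff_divide_distrib)
qed

lemma fsig_le_linearization:
  "fsig \<sigma> b \<le> fsig \<sigma> a + frob (grad_fsig \<sigma> a) b - frob (grad_fsig \<sigma> a) a"
proof -
  have "fsig \<sigma> b \<le> (\<Sum>j\<in>UNIV. \<Sum>k\<in>UNIV. 1 - exp (- (a $ j $ k) / \<sigma>)
      + exp (- (a $ j $ k) / \<sigma>) / \<sigma> * (b $ j $ k - a $ j $ k))"
    unfolding fsig_def by (intro sum_mono one_minus_exp_le_tangent)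
  also have "\<dots> = fsig \<sigma> a + frob (grad_fsig \<sigma> a) b - frob (grad_fsig \<sigma> a) a"
    unfolding fsig_def frob_def grad_fsig_def
    by (simp add: sum.distrib sum_subtractf right_diff_distrib)
  finally show ?thesis .
qed

lemma Hreal_le_of_Wobj_le:
  assumes "\<gamma> \<ge> 0" "lam \<ge> 0"
    and "Wobj C D \<gamma> lam (grad_fsig \<sigma> (absm (Pmap W))) W W'
           \<le> Wobj C D \<gamma> lam (grad_fsig \<sigma> (absm (Pmap W))) W W"
  shows "Hreal C D \<gamma> \<sigma> W' \<le> Hreal C D \<gamma> \<sigma> W"
proof -
  define g where "g = grad_fsig \<sigma> (absm (Pmap W))"
  have "\<gamma> * fsig \<sigma> (absm (Pmap W')) \<le> \<gamma> * (fsig \<sigma> (absm (Pmap W))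
      + frob g (absm (Pmap W')) - frob g (absm (Pmap W)))"
    unfolding g_def using assms(1) by (intro mult_left_mono fsig_le_linearization)
  moreover have "0 \<le> (1 / (2 * lam)) * (norm (W' - W))\<^sup>2"
    using assms(2) by simp
  ultimately show ?thesis
    using assms(3) unfolding Hreal_def Wobj_def g_def[symmetric] by (simp add: algebra_simps)
qed

locale alternating_scheme =
  fixes M :: nat
    and A :: "nat \<Rightarrow> ('n::{finite,linorder}, 'n) rmat"
    and B2 :: "nat \<Rightarrow> ('m::finite, 'n) rmat"
    and B1 :: "('l::finite, 'n) rmat"
    and C :: "('n, 'q::finite) rmat"
    and D :: "('m, 'q) rmat"
    and \<gamma> \<sigma> lam :: real
    and Wt :: "nat \<Rightarrow> ('n + 'm, 'n + 'm) rmat"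
    and y :: "nat \<Rightarrow> ('n, 'm) rmat"
  assumes nonneg: "\<gamma> \<ge> 0" "lam \<ge> 0"
    and init: "Wt 0 \<in> X1 M A B2 B1"
    and odd_step: "\<And>r. r \<ge> 1 \<Longrightarrow> odd r \<Longrightarrow>
        Wt r = Wt (r - 1) \<and> y r = grad_fsig \<sigma> (absm (Pmap (Wt (r - 1))))"
    and even_step: "\<And>r. r \<ge> 1 \<Longrightarrow> even r \<Longrightarrow>
        y r = y (r - 1) \<and> Wt r \<in> X1 M A B2 B1 \<and>
        (\<forall>V \<in> X1 M A B2 B1. Wobj C D \<gamma> lam (y (r - 1)) (Wt (r - 1)) (Wt r)
                            \<le> Wobj C D \<gamma> lam (y (r - 1)) (Wt (r - 1)) V)"
begin

lemma iterate_in_X1: "Wt r \<in> X1 M A B2 B1"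
proof (induction r)
  case 0
  show ?case by (rule init)
next
  case (Suc r)
  then show ?case
    using odd_step[of "Suc r"] even_step[of "Suc r"] by (cases "odd (Suc r)") auto
qed

lemma Hreal_iterate_Suc_le: "Hreal C D \<gamma> \<sigma> (Wt (Suc r)) \<le> Hreal C D \<gamma> \<sigma> (Wt r)"
proof (cases "odd (Suc r)")
  case True
  then show ?thesis using odd_step[of "Suc r"] by simp
next
  case False
  then have "r \<ge> 1" "odd r" by (cases r; simp)+
  then have "y r = grad_fsig \<sigma> (absm (Pmap (Wt r)))"
    using odd_step[of r] by simp
  moreover have "Wobj C D \<gamma> lam (y r) (Wt r) (Wt (Suc r)) \<le> Wobj C D \<gamma> lam (y r) (Wt r) (Wt r)"
    using even_step[of "Suc r"] False iterate_in_X1[of r] by simp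
  ultimately show ?thesis
    using nonneg by (intro Hreal_le_of_Wobj_le) simp_all
qed

lemma decseq_Hsig_iterates: "decseq (\<lambda>r. Hsig M A B2 B1 C D \<gamma> \<sigma> (Wt r))"
  unfolding decseq_Suc_iff
  by (simp add: Hsig_eq_Hreal iterate_in_X1 Hreal_iterate_Suc_le)

lemma Hsig_cluster_point_eq_lim:
  assumes "strict_mono s" "(Wt \<circ> s) \<longlonglongrightarrow> Wc"
  shows "Hsig M A B2 B1 C D \<gamma> \<sigma> Wc = lim (\<lambda>r. Hsig M A B2 B1 C D \<gamma> \<sigma> (Wt r))"
proof -
  let ?H = "\<lambda>r. Hsig M A B2 B1 C D \<gamma> \<sigma> (Wt r)"
  have "Wc \<in> X1 M A B2 B1"
    using closed_X1 _ assms(2) by (rule closed_sequentially) (simp add: iterate_in_X1)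
  then have "(\<lambda>k. Hsig M A B2 B1 C D \<gamma> \<sigma> ((Wt \<circ> s) k)) \<longlonglongrightarrow> Hsig M A B2 B1 C D \<gamma> \<sigma> Wc"
    by (intro continuous_on_tendsto_compose[OF continuous_on_Hsig assms(2)])
       (simp_all add: iterate_in_X1)
  then have "(?H \<circ> s) \<longlonglongrightarrow> Hsig M A B2 B1 C D \<gamma> \<sigma> Wc"
    by (simp add: comp_def)
  moreover have "?H \<longlonglongrightarrow> lim ?H"
    using LIMSEQ_INF[OF decseq_Hsig_iterates] by (metis convergentI convergent_LIMSEQ_iff)
  then have "(?H \<circ> s) \<longlonglongrightarrow> lim ?H"
    using assms(1) by (rule LIMSEQ_subseq_LIMSEQ)
  ultimately show ?thesis
    by (rule LIMSEQ_unique)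
qed

end

theorem theorem29:
  fixes M :: nat
    and A :: "nat \<Rightarrow> ('n::{finite,linorder}, 'n) rmat"
    and B2 :: "nat \<Rightarrow> ('m::finite, 'n) rmat"
    and B1 :: "('l::finite, 'n) rmat"
    and C :: "('n, 'q::finite) rmat"
    and D :: "('m, 'q) rmat"
    and \<gamma> \<sigma> lam :: real
    and Wt :: "nat \<Rightarrow> ('n + 'm, 'n + 'm) rmat"
    and y :: "nat \<Rightarrow> ('n, 'm) rmat"
  assumes M: "M \<ge> 1"
    and CD: "transpose C ** D = 0"
    and DD: "posdef (transpose D ** D)"
    and BB: "posdef (B1 ** transpose B1)"
    and CC: "posdef (transpose C ** C)"
    and pos: "\<gamma> > 0" "\<sigma> > 0" "lam > 0"
    and init: "Wt 0 \<in> X1 M A B2 B1" "nonneg_mat (y 0)"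
    and odd_step: "\<And>r. r \<ge> 1 \<Longrightarrow> odd r \<Longrightarrow>
        Wt r = Wt (r - 1) \<and> y r = grad_fsig \<sigma> (absm (Pmap (Wt (r - 1))))"
    and even_step: "\<And>r. r \<ge> 1 \<Longrightarrow> even r \<Longrightarrow>
        y r = y (r - 1) \<and> Wt r \<in> X1 M A B2 B1 \<and>
        (\<forall>V \<in> X1 M A B2 B1. Wobj C D \<gamma> lam (y (r - 1)) (Wt (r - 1)) (Wt r)
                            \<le> Wobj C D \<gamma> lam (y (r - 1)) (Wt (r - 1)) V)"
    and Hlim: "lim (\<lambda>r. Hsig M A B2 B1 C D \<gamma> \<sigma> (Wt r))
               = (INF W. Hsig M A B2 B1 C D \<gamma> \<sigma> W)"
  shows "\<forall>Wc. (\<exists>s. strict_mono s \<and> (Wt \<circ> s) \<longlonglongrightarrow> Wc) \<longrightarrow>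
           (\<forall>V. Hsig M A B2 B1 C D \<gamma> \<sigma> Wc \<le> Hsig M A B2 B1 C D \<gamma> \<sigma> V)"
proof (intro allI impI)
  interpret alternating_scheme M A B2 B1 C D \<gamma> \<sigma> lam Wt y
    using pos init(1) odd_step even_step by unfold_locales simp_all
  fix Wc V
  assume "\<exists>s. strict_mono s \<and> (Wt \<circ> s) \<longlonglongrightarrow> Wc"
  then obtain s where "strict_mono s" "(Wt \<circ> s) \<longlonglongrightarrow> Wc" by blast
  then have "Hsig M A B2 B1 C D \<gamma> \<sigma> Wc = (INF W. Hsig M A B2 B1 C D \<gamma> \<sigma> W)"
    unfolding Hlim[symmetric] by (rule Hsig_cluster_point_eq_lim)
  then show "Hsig M A B2 B1 C D \<gamma> \<sigma> Wc \<le> Hsig M A B2 B1 C D \<gamma> \<sigma> V"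
    by (simp add: INF_lower)
qed

end
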